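(* There is an absolute constant $C$ such that the following holds. Let $A=(\Sigma, Q, Q_0, \delta, F)$ be an NFA with $n$ states that remembers the last symbol. For each symbol $a \in \Sigma$, let $Q_a=\bigcup_{q\in Q}\delta(q,a) \subseteq Q$ be the set of states reachable by a transition by $a$, and let $n_1 = \max_{a \in \Sigma} |Q_a|$. Then there is a DFA with at most $2^{n-n_1} \cdot (g(n_1)+Cn_1^2)$ states recognizing $L(A)$.
   Context: Landau's function is $g(m)=\max\{\operatorname{lcm}(p_1,\ldots,p_k) : k\geqslant 1,\ p_i\geqslant 1 \text{ integers},\ p_1+\cdots+p_k\leqslant m\}$. An NFA is a quintuple $(\Sigma,Q,Q_0,\delta,F)$ with set of initial states $Q_0\subseteq Q$, transition function $\delta\colon Q\times\Sigma\to 2^Q$ and accepting states $F$. A DFA is an NFA with one initial state and exactly one transition from each state by each symbol. An NFA remembers the last symbol if its state set is a disjoint union of subsets $P_a$ ($a\in\Sigma$) with $\delta(q,a)\subseteq P_a$ for all $q\in Q$, $a\in\Sigma$. *)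

theory Defs
  imports Complex_Main
begin

(* For m = 0 the set of such lists is empty; we use the
   standard convention g(0) = 1 (the lcm of the empty partition). *)
definition landau :: "nat \<Rightarrow> nat" where
  "landau m = Max (insert 1 {Lcm (set ps) | ps. ps \<noteq> [] \<and> (\<forall>p\<in>set ps. p \<ge> 1) \<and> sum_list ps \<le> m})"

definition is_nfa :: "'a set \<Rightarrow> 'q set \<Rightarrow> 'q set \<Rightarrow> ('q \<Rightarrow> 'a \<Rightarrow> 'q set) \<Rightarrow> 'q set \<Rightarrow> bool" where
  "is_nfa \<Sigma> Q Q0 \<delta> F \<longleftrightarrow> finite \<Sigma> \<and> finite Q \<and> Q0 \<subseteq> Q \<and> F \<subseteq> Q \<and>
     (\<forall>q\<in>Q. \<forall>a\<in>\<Sigma>. \<delta> q a \<subseteq> Q)"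

definition is_dfa :: "'a set \<Rightarrow> 'q set \<Rightarrow> 'q set \<Rightarrow> ('q \<Rightarrow> 'a \<Rightarrow> 'q set) \<Rightarrow> 'q set \<Rightarrow> bool" where
  "is_dfa \<Sigma> Q Q0 \<delta> F \<longleftrightarrow> is_nfa \<Sigma> Q Q0 \<delta> F \<and> card Q0 = 1 \<and>
     (\<forall>q\<in>Q. \<forall>a\<in>\<Sigma>. card (\<delta> q a) = 1)"

definition delta_word :: "('q \<Rightarrow> 'a \<Rightarrow> 'q set) \<Rightarrow> 'q set \<Rightarrow> 'a list \<Rightarrow> 'q set" where
  "delta_word \<delta> S w = foldl (\<lambda>T a. \<Union>q\<in>T. \<delta> q a) S w"

definition nfa_lang :: "'a set \<Rightarrow> 'q set \<Rightarrow> ('q \<Rightarrow> 'a \<Rightarrow> 'q set) \<Rightarrow> 'q set \<Rightarrow> 'a list set" where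
  "nfa_lang \<Sigma> Q0 \<delta> F = {w. set w \<subseteq> \<Sigma> \<and> delta_word \<delta> Q0 w \<inter> F \<noteq> {}}"

definition remembers_last :: "'a set \<Rightarrow> 'q set \<Rightarrow> ('q \<Rightarrow> 'a \<Rightarrow> 'q set) \<Rightarrow> bool" where
  "remembers_last \<Sigma> Q \<delta> \<longleftrightarrow> (\<exists>P :: 'a \<Rightarrow> 'q set.
     Q = (\<Union>a\<in>\<Sigma>. P a) \<and>
     (\<forall>a\<in>\<Sigma>. \<forall>b\<in>\<Sigma>. a \<noteq> b \<longrightarrow> P a \<inter> P b = {}) \<and>
     (\<forall>q\<in>Q. \<forall>a\<in>\<Sigma>. \<delta> q a \<subseteq> P a))"

definition reach_by :: "'q set \<Rightarrow> ('q \<Rightarrow> 'a \<Rightarrow> 'q set) \<Rightarrow> 'a \<Rightarrow> 'q set" where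
  "reach_by Q \<delta> a = (\<Union>q\<in>Q. \<delta> q a)"

end

(*
  Fix a letter a
  with |Q_a| = n1 maximal and put U = Q - Q_a. As the automaton remembers the last symbol, after
  any other letter the current subset lies in U, which accounts for the factor 2^(n - n1). Along a
  maximal block of letters a the subset runs through the orbit Y, E Y, E^2 Y, ... of the relation E
  of a-transitions on Q_a, where Y is determined by the subset (Q0 or a nonempty subset of U)
  before the block.

  For a digraph on s vertices, walks of any length k >= 10 s^2 + 3 s can be re-timed to every
  length congruent to k modulo the lcm of the periods (gcds of the closed walk lengths) of its
  strongly connected components: cut the walk into its pieces inside components and lengthen or
  shorten the long pieces in cyclic components, using that every multiple of the gcd of finitely
  many positive integers <= B which is >= B^2 is a nonnegative combination of them. The periods
  are bounded by the sizes of the disjoint components, so their lcm is at most g(s), and every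
  orbit has at most g(s) + 13 s^2 elements.
*)

theory Submission
  imports Defs
begin

section \<open>Nonnegative integer combinations\<close>

lemma Gcd_image_int_combination:
  fixes d :: "'i \<Rightarrow> nat"
  assumes "finite I"
  shows "\<exists>c. int (Gcd (d ` I)) = (\<Sum>i\<in>I. c i * int (d i))"
  using assms
proof (induction I rule: finite_induct)
  case empty
  show ?case by simp
next
  case (insert i I)
  obtain c where c: "int (Gcd (d ` I)) = (\<Sum>j\<in>I. c j * int (d j))"
    using insert.IH by blast
  obtain u v where uv: "u * int (d i) + v * int (Gcd (d ` I)) = gcd (int (d i)) (int (Gcd (d ` I)))"
    using bezout_int by blast
  define c' where "c' j = (if j = i then u else v * c j)" for j
  have "(\<Sum>j\<in>I. c' j * int (d j)) = v * (\<Sum>j\<in>I. c j * int (d j))"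
    unfolding sum_distrib_left by (rule sum.cong) (use insert.hyps in \<open>auto simp: c'_def\<close>)
  then have "(\<Sum>j\<in>insert i I. c' j * int (d j)) = u * int (d i) + v * (\<Sum>j\<in>I. c j * int (d j))"
    using insert.hyps by (simp add: c'_def)
  also have "\<dots> = int (Gcd (d ` insert i I))"
    unfolding c [symmetric] using uv by simp
  finally show ?case by metis
qed

lemma exists_combination_mod:
  fixes d :: "'i \<Rightarrow> nat"
  assumes "finite I" "0 < a" "Gcd (d ` I) dvd n"
  shows "\<exists>k. (\<Sum>i\<in>I. k i * d i) mod a = n mod a"
proof -
  obtain q where q: "n = Gcd (d ` I) * q"
    using assms(3) by blast
  obtain c where c: "int (Gcd (d ` I)) = (\<Sum>i\<in>I. c i * int (d i))"
    using Gcd_image_int_combination[OF assms(1)] by blast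
  define k where "k i = nat ((int q * c i) mod int a)" for i
  have k: "int (k i) = (int q * c i) mod int a" for i
    using assms(2) by (simp add: k_def)
  have "int (\<Sum>i\<in>I. k i * d i) mod int a = (\<Sum>i\<in>I. (int q * c i) mod int a * int (d i)) mod int a"
    by (simp add: k)
  also have "\<dots> = (\<Sum>i\<in>I. (int q * c i) mod int a * int (d i) mod int a) mod int a"
    by (simp only: mod_sum_eq)
  also have "\<dots> = (\<Sum>i\<in>I. int q * c i * int (d i) mod int a) mod int a"
    by (simp only: mod_mult_left_eq)
  also have "\<dots> = (\<Sum>i\<in>I. int q * c i * int (d i)) mod int a"
    by (simp only: mod_sum_eq)
  also have "\<dots> = int n mod int a"
    by (simp add: q c sum_distrib_left mult_ac)
  finally show ?thesis
    by (metis of_nat_eq_iff of_nat_mod)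
qed

lemma exists_sum_list_eq_combination:
  fixes d :: "'i \<Rightarrow> nat"
  assumes "finite I"
  shows "\<exists>xs. set xs \<subseteq> I \<and> sum_list (map d xs) = (\<Sum>i\<in>I. k i * d i)"
  using assms
proof (induction I rule: finite_induct)
  case (insert i I)
  then obtain xs where "set xs \<subseteq> I" "sum_list (map d xs) = (\<Sum>i\<in>I. k i * d i)"
    by blast
  with insert.hyps show ?case
    by (intro exI[of _ "replicate (k i) i @ xs"]) (auto simp: sum_list_replicate)
qed simp

lemma pigeonhole_repeat:
  assumes "finite W" "card W < l" "\<And>i. i < l \<Longrightarrow> f i \<in> W"
  shows "\<exists>i j. i < j \<and> j < l \<and> f i = f j"
proof -
  have "card (f ` {..<l}) \<le> card W"
    using assms(1,3) by (intro card_mono) auto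
  then have "\<not> inj_on f {..<l}"
    using assms(2) pigeonhole[of f "{..<l}"] by simp
  then obtain i j where "i < l" "j < l" "i \<noteq> j" "f i = f j"
    by (auto simp: inj_on_def)
  then show ?thesis
    by (metis linorder_neqE_nat)
qed

lemma sum_list_mod_short:
  fixes d :: "'i \<Rightarrow> nat"
  assumes "0 < a"
  shows "\<exists>ys. set ys \<subseteq> set xs \<and> length ys < a \<and>
           sum_list (map d ys) mod a = sum_list (map d xs) mod a"
proof (induction "length xs" arbitrary: xs rule: less_induct)
  case less
  show ?case
  proof (cases "length xs < a")
    case True
    then show ?thesis by blast
  next
    case False
    obtain i j where ij: "i < j" "j < Suc a"
        "sum_list (map d (take i xs)) mod a = sum_list (map d (take j xs)) mod a"
      using pigeonhole_repeat[of "{..<a}" "Suc a" "\<lambda>i. sum_list (map d (take i xs)) mod a"] assms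
      by auto
    \<comment> \<open>dropping the block between positions i and j keeps the residue\<close>
    define zs where "zs = take i xs @ drop j xs"
    have "length zs < length xs"
      using ij False by (simp add: zs_def)
    moreover have "sum_list (map d zs) mod a = sum_list (map d xs) mod a"
    proof -
      have "sum_list (map d xs) = sum_list (map d (take j xs)) + sum_list (map d (drop j xs))"
        by (metis append_take_drop_id map_append sum_list_append)
      moreover have "sum_list (map d (take j xs)) mod a = sum_list (map d (take i xs)) mod a"
        using ij by simp
      ultimately show ?thesis
        by (metis mod_add_left_eq sum_list_append map_append zs_def)
    qed
    moreover have "set zs \<subseteq> set xs"
      using set_take_subset[of i xs] set_drop_subset[of j xs] by (auto simp: zs_def)
    ultimately show ?thesis
      using less.hyps[of zs] by (metis order_trans)
  qed
qed

lemma exists_combination_if_Gcd_dvd: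
  fixes d :: "'i \<Rightarrow> nat"
  assumes "finite I" "i0 \<in> I" "\<forall>i\<in>I. 0 < d i \<and> d i \<le> B"
    and "Gcd (d ` I) dvd n" "B * B \<le> n"
  shows "\<exists>k. n = (\<Sum>i\<in>I. k i * d i)"
proof -
  let ?a = "d i0"
  have a: "0 < ?a" "?a \<le> B"
    using assms(2,3) by auto
  obtain k where "(\<Sum>i\<in>I. k i * d i) mod ?a = n mod ?a"
    using exists_combination_mod[OF assms(1) a(1) assms(4)] by blast
  moreover obtain xs where xs: "set xs \<subseteq> I" "sum_list (map d xs) = (\<Sum>i\<in>I. k i * d i)"
    using exists_sum_list_eq_combination[OF assms(1)] by blast
  ultimately obtain ys where ys: "set ys \<subseteq> I" "length ys < ?a" "sum_list (map d ys) mod ?a = n mod ?a"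
    using sum_list_mod_short[OF a(1), where d = d and xs = xs] by auto
  have "sum_list (map d ys) \<le> sum_list (map (\<lambda>_. B) ys)"
    using ys(1) assms(3) by (intro sum_list_mono) auto
  also have "\<dots> \<le> B * B"
    using ys(2) a(2) by (simp add: sum_list_triv)
  finally have le: "sum_list (map d ys) \<le> n"
    using assms(5) by linarith
  then obtain q where q: "n = sum_list (map d ys) + ?a * q"
    using ys(3) by (metis le_add_diff_inverse mod_eq_dvd_iff_nat dvdE)
  define k' where "k' i = count_list ys i + (if i = i0 then q else 0)" for i
  have "(\<Sum>i\<in>I. k' i * d i) = (\<Sum>i\<in>I. count_list ys i * d i + (if i = i0 then q * d i else 0))"
    by (rule sum.cong) (auto simp: k'_def algebra_simps)
  also have "\<dots> = (\<Sum>i\<in>I. count_list ys i * d i) + q * ?a"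
    using assms(1,2) by (simp add: sum.distrib)
  also have "\<dots> = n"
    using sum_list_map_eq_sum_count2[OF ys(1) assms(1)] q by simp
  finally show ?thesis by metis
qed

lemma exists_combination_if_mod_eq:
  fixes d :: "'i \<Rightarrow> nat"
  assumes "finite I" "i0 \<in> I" "\<forall>i\<in>I. 0 < d i \<and> d i \<le> B \<and> d i dvd p"
    and "J = b + (\<Sum>i\<in>I. q i * d i)" "J mod p = J' mod p" "b + B * B \<le> J'"
  shows "\<exists>c. J' = b + (\<Sum>i\<in>I. c i * d i)"
proof -
  let ?g = "Gcd (d ` I)"
  have g_dvd: "?g dvd d i" if "i \<in> I" for i
    using that by (simp add: Gcd_dvd)
  then have "?g dvd p"
    using assms(2,3) dvd_trans by blast
  then have "J' mod ?g = J mod ?g"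
    by (metis assms(5) mod_mod_cancel)
  moreover have "?g dvd (\<Sum>i\<in>I. q i * d i)"
    using g_dvd by (simp add: dvd_sum)
  then have "J mod ?g = b mod ?g"
    by (simp add: assms(4) dvd_eq_mod_eq_0 mod_add_right_eq[symmetric])
  ultimately have "?g dvd J' - b"
    using assms(6) by (simp add: mod_eq_dvd_iff_nat)
  moreover have "B * B \<le> J' - b"
    using assms(6) by simp
  ultimately obtain c where "J' - b = (\<Sum>i\<in>I. c i * d i)"
    using exists_combination_if_Gcd_dvd[OF assms(1,2), of d B] assms(3) by auto
  then show ?thesis
    using assms(6) by (intro exI[of _ c]) simp
qed

section \<open>Landau's function\<close>

lemma finite_landau_set:
  fixes m :: nat
  shows "finite {Lcm (set ps) | ps. ps \<noteq> [] \<and> (\<forall>p\<in>set ps. p \<ge> 1) \<and> sum_list ps \<le> m}"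
proof (rule finite_subset)
  show "{Lcm (set ps) | ps. ps \<noteq> [] \<and> (\<forall>p\<in>set ps. p \<ge> 1) \<and> sum_list ps \<le> m}
      \<subseteq> Lcm ` Pow {1..m}"
  proof
    fix x
    assume "x \<in> {Lcm (set ps) | ps. ps \<noteq> [] \<and> (\<forall>p\<in>set ps. p \<ge> 1) \<and> sum_list ps \<le> m}"
    then obtain ps where ps: "x = Lcm (set ps)" "\<forall>p\<in>set ps. p \<ge> 1" "sum_list ps \<le> m"
      by blast
    have "p \<in> {1..m}" if "p \<in> set ps" for p
      using ps(2,3) member_le_sum_list[OF that] that by auto
    then show "x \<in> Lcm ` Pow {1..m}"
      using ps(1) by blast
  qed
qed (intro finite_imageI, simp)

lemma one_le_landau: "1 \<le> landau m"
  unfolding landau_def using finite_landau_set[of m] by (intro Max_ge) auto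

lemma Lcm_le_landau:
  fixes P :: "nat set"
  assumes "finite P" "0 \<notin> P" "\<Sum>P \<le> m"
  shows "Lcm P \<le> landau m"
proof (cases "P = {}")
  case True
  then show ?thesis
    using one_le_landau by simp
next
  case False
  let ?ps = "sorted_list_of_set P"
  have "sum_list ?ps = \<Sum>P"
    using sum_list_distinct_conv_sum_set[of ?ps "\<lambda>p. p"] assms(1) by simp
  moreover have "\<forall>p\<in>set ?ps. p \<ge> 1"
  proof
    fix p
    assume "p \<in> set ?ps"
    then have "p \<in> P"
      using assms(1) by simp
    then show "p \<ge> 1"
      using assms(2) by (cases p) auto
  qed
  moreover have "?ps \<noteq> []"
    using assms(1) False by simp
  ultimately have "?ps \<noteq> []" "\<forall>p\<in>set ?ps. p \<ge> 1" "sum_list ?ps \<le> m"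
    using assms(3) by simp_all
  then have "Lcm (set ?ps) \<in> {Lcm (set ps) | ps. ps \<noteq> [] \<and> (\<forall>p\<in>set ps. p \<ge> 1) \<and> sum_list ps \<le> m}"
    by (intro CollectI exI[of _ ?ps]) simp
  then have "Lcm (set ?ps) \<le> landau m"
    unfolding landau_def using finite_landau_set[of m] by (meson Max_ge finite_insert insertCI)
  then show ?thesis
    using assms(1) by simp
qed

section \<open>Walks\<close>

lemma relpow_of_path:
  assumes "\<forall>k<l. (f k, f (Suc k)) \<in> R" "i \<le> j" "j \<le> l"
  shows "(f i, f j) \<in> R ^^ (j - i)"
  unfolding relpow_fun_conv
  by (rule exI[of _ "\<lambda>k. f (k + i)"]) (use assms in auto)

lemma relpow_shorten:
  assumes "finite W" "x \<in> W" "R \<subseteq> W \<times> W" "(x, z) \<in> R ^^ l"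
  shows "\<exists>l' < card W. (x, z) \<in> R ^^ l'"
  using assms(4)
proof (induction l rule: less_induct)
  case (less l)
  show ?case
  proof (cases "l < card W")
    case True
    with less.prems show ?thesis by blast
  next
    case False
    obtain f where f: "f 0 = x" "f l = z" "\<forall>k<l. (f k, f (Suc k)) \<in> R"
      using less.prems unfolding relpow_fun_conv by blast
    have "f k \<in> W" if "k < Suc l" for k
    proof (cases k)
      case (Suc k')
      then show ?thesis
        using f(3) that assms(3) by auto
    qed (use f(1) assms(2) in simp)
    then obtain i j where ij: "i < j" "j < Suc l" "f i = f j"
      using pigeonhole_repeat[of W "Suc l" f] assms(1) False by force
    \<comment> \<open>cut out the closed walk between positions i and j\<close>
    have "(x, f i) \<in> R ^^ i" "(f j, z) \<in> R ^^ (l - j)"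
      using relpow_of_path[OF f(3), of 0 i] relpow_of_path[OF f(3), of j l] ij f by auto
    then have "(x, z) \<in> R ^^ (i + (l - j))"
      using ij(3) relpow_trans by fastforce
    moreover have "i + (l - j) < l"
      using ij by simp
    ultimately show ?thesis
      using less.IH by blast
  qed
qed

lemma relpow_cycle_split:
  assumes "finite S" "card S < c" "(w, w) \<in> (R \<inter> S \<times> S) ^^ c"
  shows "\<exists>v c1 c2. v \<in> S \<and> 0 < c1 \<and> 0 < c2 \<and> c = c1 + c2 \<and> (w, w) \<in> R ^^ c1 \<and> (v, v) \<in> R ^^ c2"
proof -
  obtain f where f: "f 0 = w" "f c = w" "\<forall>k<c. (f k, f (Suc k)) \<in> R \<inter> S \<times> S"
    using assms(3) unfolding relpow_fun_conv by blast
  have in_S: "f k \<in> S" if "k < c" for k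
    using f(3) that by blast
  obtain i j where ij: "i < j" "j < c" "f i = f j"
    using pigeonhole_repeat[of S c f, OF assms(1,2) in_S] by auto
  have path: "\<forall>k<c. (f k, f (Suc k)) \<in> R"
    using f(3) by blast
  have "(w, f i) \<in> R ^^ i" "(f j, w) \<in> R ^^ (c - j)" "(f i, f j) \<in> R ^^ (j - i)"
    using relpow_of_path[OF path, of 0 i] relpow_of_path[OF path, of j c]
      relpow_of_path[OF path, of i j] ij f(1,2) by simp_all
  then have "(w, w) \<in> R ^^ (i + (c - j))" "(f i, f i) \<in> R ^^ (j - i)"
    using ij(3) relpow_trans[of w "f i" i R w "c - j"] by simp_all
  moreover have "f i \<in> S" "c = (i + (c - j)) + (j - i)"
    using in_S ij by simp_all
  ultimately show ?thesis
    using ij by (metis add_gr_0 zero_less_diff)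
qed

lemma relpow_cycle_mult:
  assumes "(x, x) \<in> R ^^ l"
  shows "(x, x) \<in> R ^^ (k * l)"
proof (induction k)
  case (Suc k)
  then show ?case
    using relpow_trans[OF assms Suc.IH] by simp
qed simp

lemma relpow_cycle_combination:
  assumes "finite I" "\<forall>l\<in>I. (x, x) \<in> R ^^ l"
  shows "(x, x) \<in> R ^^ (\<Sum>l\<in>I. k l * l)"
  using assms
proof (induction I rule: finite_induct)
  case (insert l I)
  then show ?case
    using relpow_trans[OF relpow_cycle_mult[of x l R "k l"]] by simp
qed simp

lemma relpow_concat:
  assumes "\<forall>i\<le>m. (U i, W i) \<in> R ^^ L i" "\<forall>i<m. (W i, U (Suc i)) \<in> R"
  shows "(U 0, W m) \<in> R ^^ ((\<Sum>i\<le>m. L i) + m)"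
  using assms
proof (induction m)
  case (Suc m)
  have "(U 0, W m) \<in> R ^^ ((\<Sum>i\<le>m. L i) + m)"
    using Suc.IH Suc.prems by auto
  moreover have "(W m, U (Suc m)) \<in> R" "(U (Suc m), W (Suc m)) \<in> R ^^ L (Suc m)"
    using Suc.prems by auto
  ultimately have "(U 0, W (Suc m)) \<in> R ^^ (Suc ((\<Sum>i\<le>m. L i) + m) + L (Suc m))"
    by (meson relpow_Suc_I relpow_trans)
  then show ?case
    by (simp add: add_ac)
qed simp

section \<open>Eventual periodicity of walks in a finite digraph\<close>

locale finite_digraph =
  fixes V :: "'v set" and R :: "'v rel"
  assumes finite_vertices: "finite V" and edges_subset: "R \<subseteq> V \<times> V"
begin

definition scc :: "'v \<Rightarrow> 'v set" where
  "scc u = {v. (u, v) \<in> R\<^sup>* \<and> (v, u) \<in> R\<^sup>*}"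

definition cyclic :: "'v \<Rightarrow> bool" where
  "cyclic u \<longleftrightarrow> (u, u) \<in> R\<^sup>+"

definition period :: "'v \<Rightarrow> nat" where
  "period u = Gcd {l. (u, u) \<in> R ^^ l}"

lemma scc_refl [simp]: "u \<in> scc u"
  by (simp add: scc_def)

lemma scc_sym: "v \<in> scc u \<Longrightarrow> u \<in> scc v"
  by (simp add: scc_def)

lemma scc_eq: "v \<in> scc u \<Longrightarrow> scc v = scc u"
  unfolding scc_def by (auto dest: rtrancl_trans)

lemma scc_subset: "scc u \<subseteq> insert u V"
proof
  fix v assume "v \<in> scc u"
  then have "(u, v) \<in> R\<^sup>*"
    by (simp add: scc_def)
  then show "v \<in> insert u V"
    using edges_subset by (induction rule: rtrancl_induct) auto
qed

lemma finite_scc [simp]: "finite (scc u)"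
  using finite_subset[OF scc_subset] finite_vertices by blast

lemma card_scc_pos: "0 < card (scc u)"
  by (metis card_gt_0_iff empty_iff finite_scc scc_refl)

lemma scc_subset_vertices: "u \<in> V \<Longrightarrow> scc u \<subseteq> V"
  using scc_subset by blast

lemma card_scc_le: "u \<in> V \<Longrightarrow> card (scc u) \<le> card V"
  by (intro card_mono finite_vertices scc_subset_vertices)

lemma walk_within_scc:
  assumes "(u, v) \<in> R ^^ l" "v \<in> scc u"
  shows "(u, v) \<in> (R \<inter> scc u \<times> scc u) ^^ l"
  using assms
proof (induction l arbitrary: v)
  case (Suc l)
  then obtain y where y: "(u, y) \<in> R ^^ l" "(y, v) \<in> R"
    by (blast elim: relpow_Suc_E)
  have "(u, y) \<in> R\<^sup>*" "(y, u) \<in> R\<^sup>*"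
    using y relpow_imp_rtrancl Suc.prems(2) converse_rtrancl_into_rtrancl
    by (auto simp: scc_def)
  then have "y \<in> scc u"
    by (simp add: scc_def)
  with y Suc.prems(2) Suc.IH show ?case
    by (intro relpow_Suc_I) auto
qed simp

lemma short_walk_within_scc:
  assumes "v \<in> scc u"
  shows "\<exists>l < card (scc u). (u, v) \<in> R ^^ l"
proof -
  obtain l where "(u, v) \<in> R ^^ l"
    using assms by (auto simp: scc_def rtrancl_power)
  then have "(u, v) \<in> (R \<inter> scc u \<times> scc u) ^^ l"
    using walk_within_scc assms by blast
  then obtain l' where "l' < card (scc u)" "(u, v) \<in> (R \<inter> scc u \<times> scc u) ^^ l'"
    using relpow_shorten[of "scc u" u "R \<inter> scc u \<times> scc u"] by auto
  moreover have "R \<inter> scc u \<times> scc u \<subseteq> R"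
    by blast
  ultimately show ?thesis
    using relpowp_mono[to_set, of "R \<inter> scc u \<times> scc u" R] by blast
qed

lemma short_cycle:
  assumes "cyclic u"
  shows "\<exists>c. 0 < c \<and> c \<le> card (scc u) \<and> (u, u) \<in> R ^^ c"
proof -
  obtain y where y: "(u, y) \<in> R" "(y, u) \<in> R\<^sup>*"
    using assms by (auto simp: cyclic_def dest: tranclD)
  then have "u \<in> scc y"
    by (auto simp: scc_def)
  then obtain a where "a < card (scc y)" "(y, u) \<in> R ^^ a"
    using short_walk_within_scc by blast
  moreover have "scc y = scc u"
    using \<open>u \<in> scc y\<close> by (metis scc_eq scc_sym)
  moreover have "(u, u) \<in> R ^^ Suc a"
    using y(1) \<open>(y, u) \<in> R ^^ a\<close> by (rule relpow_Suc_I2)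
  ultimately show ?thesis
    by (metis Suc_leI zero_less_Suc)
qed

definition short_cycle_lengths :: "'v \<Rightarrow> nat set" where
  "short_cycle_lengths u = {c. 0 < c \<and> c \<le> 3 * card (scc u) \<and> (u, u) \<in> R ^^ c}"

lemma Gcd_short_cycle_lengths_dvd:
  assumes "w \<in> scc u" "(w, w) \<in> R ^^ c"
  shows "Gcd (short_cycle_lengths u) dvd c"
  using assms
proof (induction c arbitrary: w rule: less_induct)
  case (less c)
  let ?t = "card (scc u)"
  have in_short: "Gcd (short_cycle_lengths u) dvd l" if "(u, u) \<in> R ^^ l" "l \<le> 3 * ?t" for l
    using that by (cases "l = 0") (auto simp: short_cycle_lengths_def intro: Gcd_dvd)
  show ?case
  proof (cases "c \<le> ?t")
    case True
    \<comment> \<open>go from u to w and back, with and without the cycle at w\<close>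
    obtain a b where ab: "a < ?t" "(u, w) \<in> R ^^ a" "b < ?t" "(w, u) \<in> R ^^ b"
      using short_walk_within_scc less.prems(1) scc_sym scc_eq by metis
    then have "(u, u) \<in> R ^^ (a + b)" "(u, u) \<in> R ^^ (a + c + b)"
      using less.prems(2) by (meson relpow_trans)+
    moreover have "a + b \<le> 3 * ?t" "a + c + b \<le> 3 * ?t"
      using ab(1,3) True by linarith+
    ultimately have "Gcd (short_cycle_lengths u) dvd a + b" "Gcd (short_cycle_lengths u) dvd c + (a + b)"
      using in_short by (simp_all add: add_ac)
    then show ?thesis
      using dvd_add_left_iff by blast
  next
    case False
    \<comment> \<open>a closed walk longer than the component repeats a vertex\<close>
    have "(w, w) \<in> (R \<inter> scc u \<times> scc u) ^^ c"
      using walk_within_scc[OF less.prems(2) scc_refl] scc_eq[OF less.prems(1)] by simp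
    then obtain v c1 c2 where "v \<in> scc u" "0 < c1" "0 < c2" "c = c1 + c2"
      "(w, w) \<in> R ^^ c1" "(v, v) \<in> R ^^ c2"
      using relpow_cycle_split[of "scc u" c w R] False by (meson finite_scc not_le)
    then have "Gcd (short_cycle_lengths u) dvd c1" "Gcd (short_cycle_lengths u) dvd c2"
      using less.IH less.prems(1) by simp_all
    with \<open>c = c1 + c2\<close> show ?thesis
      by simp
  qed
qed

lemma period_eq_Gcd_short_cycle_lengths: "period u = Gcd (short_cycle_lengths u)"
proof (rule dvd_antisym)
  show "period u dvd Gcd (short_cycle_lengths u)"
    unfolding period_def by (rule Gcd_greatest) (auto simp: short_cycle_lengths_def intro: Gcd_dvd)
  show "Gcd (short_cycle_lengths u) dvd period u"
    unfolding period_def by (rule Gcd_greatest) (auto intro: Gcd_short_cycle_lengths_dvd[OF scc_refl])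
qed

lemma period_dvd_cycle: "w \<in> scc u \<Longrightarrow> (w, w) \<in> R ^^ c \<Longrightarrow> period u dvd c"
  unfolding period_eq_Gcd_short_cycle_lengths by (rule Gcd_short_cycle_lengths_dvd)

lemma period_scc:
  assumes "v \<in> scc u"
  shows "period v = period u"
proof (rule dvd_antisym)
  show "period v dvd period u"
    unfolding period_def[of u] by (rule Gcd_greatest) (auto intro: period_dvd_cycle scc_sym[OF assms])
  show "period u dvd period v"
    unfolding period_def[of v] by (rule Gcd_greatest) (auto intro: period_dvd_cycle assms)
qed

lemma period_pos_le:
  assumes "cyclic u"
  shows "0 < period u" "period u \<le> card (scc u)"
proof -
  obtain c where c: "0 < c" "c \<le> card (scc u)" "(u, u) \<in> R ^^ c"
    using short_cycle[OF assms] by blast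
  then have "period u dvd c"
    using period_dvd_cycle scc_refl by blast
  then show "0 < period u" "period u \<le> card (scc u)"
    using c(1,2) dvd_imp_le[of "period u" c] by (auto intro: Nat.gr0I)
qed

lemma walk_in_acyclic_scc:
  assumes "\<not> cyclic u" "(u, w) \<in> R ^^ l" "w \<in> scc u"
  shows "l = 0"
proof (rule ccontr)
  assume "l \<noteq> 0"
  then have "(u, w) \<in> R\<^sup>+"
    using assms(2) trancl_power by blast
  moreover have "(w, u) \<in> R\<^sup>*"
    using assms(3) by (simp add: scc_def)
  ultimately show False
    using assms(1) by (simp add: cyclic_def trancl_rtrancl_trancl)
qed

definition scc_threshold :: "'v \<Rightarrow> nat" where
  "scc_threshold u = (3 * card (scc u))\<^sup>2 + card (scc u)"

lemma long_walk_within_scc: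
  assumes "cyclic u" "w \<in> scc u" "(u, w) \<in> R ^^ l"
    and "scc_threshold u \<le> l'" "l' mod period u = l mod period u"
  shows "(u, w) \<in> R ^^ l'"
proof -
  let ?t = "card (scc u)"
  obtain a where a: "a < ?t" "(u, w) \<in> R ^^ a"
    using short_walk_within_scc[OF assms(2)] by blast
  obtain r where r: "(w, u) \<in> R ^^ r"
    using assms(2) by (auto simp: scc_def rtrancl_power)
  have "period u dvd l + r" "period u dvd a + r"
    using period_dvd_cycle[OF scc_refl] relpow_trans[OF assms(3) r] relpow_trans[OF a(2) r] by auto
  then have "period u dvd l' + r"
    using mod_add_cong[OF assms(5) refl, of r] by (simp add: dvd_eq_mod_eq_0)
  then have "period u dvd (l' + r) - (a + r)"
    using \<open>period u dvd a + r\<close> by (rule dvd_diff_nat)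
  then have "Gcd (id ` short_cycle_lengths u) dvd l' - a"
    by (simp add: period_eq_Gcd_short_cycle_lengths)
  moreover obtain c where "c \<in> short_cycle_lengths u"
    using short_cycle[OF assms(1)] by (force simp: short_cycle_lengths_def)
  moreover have "finite (short_cycle_lengths u)"
    by (rule finite_subset[of _ "{..3 * ?t}"]) (auto simp: short_cycle_lengths_def)
  moreover have "(3 * ?t) * (3 * ?t) \<le> l' - a"
    using assms(4) a(1) by (simp add: scc_threshold_def power2_eq_square)
  ultimately obtain k where k: "l' - a = (\<Sum>x\<in>short_cycle_lengths u. k x * id x)"
    using exists_combination_if_Gcd_dvd[of "short_cycle_lengths u" c id "3 * ?t"]
    by (auto simp: short_cycle_lengths_def)
  have "\<forall>x\<in>short_cycle_lengths u. (u, u) \<in> R ^^ x"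
    by (simp add: short_cycle_lengths_def)
  then have "(u, u) \<in> R ^^ (\<Sum>x\<in>short_cycle_lengths u. k x * x)"
    by (rule relpow_cycle_combination[OF \<open>finite (short_cycle_lengths u)\<close>])
  then have "(u, u) \<in> R ^^ (l' - a)"
    using k by simp
  then have "(u, w) \<in> R ^^ (l' - a + a)"
    using a(2) by (rule relpow_trans)
  then show ?thesis
    using a(1) assms(4) by (simp add: scc_threshold_def)
qed

lemma sum_card_scc_le:
  assumes "S \<subseteq> V" "\<And>u v. u \<in> S \<Longrightarrow> v \<in> S \<Longrightarrow> v \<in> scc u \<Longrightarrow> u = v"
  shows "(\<Sum>u\<in>S. card (scc u)) \<le> card V"
proof -
  have "finite S"
    using assms(1) finite_vertices finite_subset by blast
  moreover have "\<forall>u\<in>S. \<forall>v\<in>S. u \<noteq> v \<longrightarrow> scc u \<inter> scc v = {}"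
    using assms(2) scc_eq by (metis disjoint_iff scc_refl)
  ultimately have "(\<Sum>u\<in>S. card (scc u)) = card (\<Union>u\<in>S. scc u)"
    by (simp add: card_UN_disjoint)
  also have "\<dots> \<le> card V"
    using assms(1) scc_subset_vertices by (intro card_mono finite_vertices) blast
  finally show ?thesis .
qed

text \<open>A walk from x to z, cut into its maximal pieces inside strongly connected components:
  the i-th piece enters its component at U i and leaves it at W i after L i steps, and is
  followed by an edge into the next component.\<close>

definition scc_decomposition ::
    "'v \<Rightarrow> 'v \<Rightarrow> nat \<Rightarrow> (nat \<Rightarrow> 'v) \<Rightarrow> (nat \<Rightarrow> 'v) \<Rightarrow> (nat \<Rightarrow> nat) \<Rightarrow> bool" where
  "scc_decomposition x z k U W L \<longleftrightarrow> U 0 = x \<and> W k = z \<and>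
     (\<forall>i\<le>k. (U i, W i) \<in> R ^^ L i \<and> W i \<in> scc (U i)) \<and>
     (\<forall>i<k. (W i, U (Suc i)) \<in> R \<and> U (Suc i) \<notin> scc (W i))"

lemma scc_decomposition_exists:
  "(x, z) \<in> R ^^ J \<Longrightarrow> \<exists>k U W L. scc_decomposition x z k U W L \<and> J = (\<Sum>i\<le>k. L i) + k"
proof (induction J arbitrary: z)
  case 0
  then have "scc_decomposition x z 0 (\<lambda>_. x) (\<lambda>_. x) (\<lambda>_. 0)"
    by (simp add: scc_decomposition_def)
  then show ?case
    by fastforce
next
  case (Suc J)
  obtain y where y: "(x, y) \<in> R ^^ J" "(y, z) \<in> R"
    using Suc.prems by (blast elim: relpow_Suc_E)
  obtain k U W L where D: "scc_decomposition x y k U W L" and J: "J = (\<Sum>i\<le>k. L i) + k"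
    using Suc.IH[OF y(1)] by blast
  have last: "(U k, W k) \<in> R ^^ L k" "W k \<in> scc (U k)" "W k = y"
    using D by (auto simp: scc_decomposition_def)
  show ?case
  proof (cases "z \<in> scc (W k)")
    case True
    define L' where "L' i = L i + (if i = k then 1 else 0)" for i
    have "(U k, z) \<in> R ^^ Suc (L k)" "z \<in> scc (U k)"
      using last y(2) True scc_eq by (auto intro: relpow_Suc_I)
    then have "scc_decomposition x z k U (W(k := z)) L'"
      using D by (auto simp: scc_decomposition_def L'_def)
    moreover have "Suc J = (\<Sum>i\<le>k. L' i) + k"
      using J by (simp add: L'_def sum.distrib)
    ultimately show ?thesis
      by blast
  next
    case False
    have "scc_decomposition x z (Suc k) (U(Suc k := z)) (W(Suc k := z)) (L(Suc k := 0))"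
      using D False y(2) last(3) by (auto simp: scc_decomposition_def less_Suc_eq le_Suc_eq)
    moreover have "(\<Sum>i\<le>k. (L(Suc k := 0)) i) = (\<Sum>i\<le>k. L i)"
      by (rule sum.cong) auto
    then have "Suc J = (\<Sum>i\<le>Suc k. (L(Suc k := 0)) i) + Suc k"
      using J by simp
    ultimately show ?thesis
      by blast
  qed
qed

lemma scc_decomposition_reach:
  assumes "scc_decomposition x z k U W L" "i \<le> j" "j \<le> k"
  shows "(U i, U j) \<in> R\<^sup>*"
  using assms(2,3)
proof (induction j)
  case (Suc j)
  show ?case
  proof (cases "i = Suc j")
    case False
    have "(U j, W j) \<in> R ^^ L j" "(W j, U (Suc j)) \<in> R"
      using Suc.prems assms(1) by (auto simp: scc_decomposition_def)
    moreover have "(U i, U j) \<in> R\<^sup>*"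
      using Suc False by simp
    ultimately have "(U i, U j) \<in> R\<^sup>*" "(U j, W j) \<in> R\<^sup>*" "(W j, U (Suc j)) \<in> R"
      using relpow_imp_rtrancl by blast+
    then show ?thesis
      by (meson rtrancl.rtrancl_into_rtrancl rtrancl_trans)
  qed simp
qed simp

lemma scc_decomposition_distinct:
  assumes "scc_decomposition x z k U W L" "i < j" "j \<le> k"
  shows "U j \<notin> scc (U i)"
proof
  assume "U j \<in> scc (U i)"
  \<comment> \<open>then the walk would come back from the (i+1)-st component to the i-th one\<close>
  then have "(U (Suc i), W i) \<in> R\<^sup>*"
    using scc_decomposition_reach[OF assms(1), of "Suc i" j] assms
    by (auto simp: scc_decomposition_def scc_def intro: rtrancl_trans)
  moreover have "(W i, U (Suc i)) \<in> R"
    using assms by (simp add: scc_decomposition_def)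
  ultimately have "U (Suc i) \<in> scc (W i)"
    by (simp add: scc_def)
  then show False
    using assms by (simp add: scc_decomposition_def)
qed

lemma scc_decomposition_vertices:
  assumes "x \<in> V" "scc_decomposition x z k U W L" "i \<le> k"
  shows "U i \<in> V"
proof (cases i)
  case (Suc i')
  then have "(W i', U i) \<in> R"
    using assms(2,3) by (simp add: scc_decomposition_def)
  then show ?thesis
    using edges_subset by blast
qed (use assms in \<open>simp add: scc_decomposition_def\<close>)

lemma scc_decomposition_card_sum:
  assumes "x \<in> V" "scc_decomposition x z k U W L"
  shows "(\<Sum>i\<le>k. card (scc (U i))) \<le> card V"
proof -
  have distinct: "i = j" if "i \<le> k" "j \<le> k" "U j \<in> scc (U i)" for i j
    using scc_decomposition_distinct[OF assms(2)] scc_sym that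
    by (metis linorder_neqE_nat)
  then have "inj_on U {..k}"
    by (intro inj_onI) (metis atMost_iff scc_refl)
  moreover have "(\<Sum>u\<in>U ` {..k}. card (scc u)) \<le> card V"
    using scc_decomposition_vertices[OF assms] distinct by (intro sum_card_scc_le) auto
  ultimately show ?thesis
    by (simp add: sum.reindex)
qed

lemma scc_decomposition_threshold_sum:
  assumes "x \<in> V" "scc_decomposition x z k U W L"
  shows "(\<Sum>i\<le>k. scc_threshold (U i) + card (scc (U i))) + k + (card V)\<^sup>2
           \<le> 10 * (card V)\<^sup>2 + 3 * card V"
proof -
  let ?s = "card V" and ?t = "\<lambda>i. card (scc (U i))"
  have sum_t: "(\<Sum>i\<le>k. ?t i) \<le> ?s"
    using scc_decomposition_card_sum[OF assms] .
  have "(\<Sum>i\<le>k. scc_threshold (U i) + ?t i) \<le> (\<Sum>i\<le>k. (9 * ?s + 2) * ?t i)"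
  proof (rule sum_mono)
    fix i assume "i \<in> {..k}"
    then have "?t i \<le> ?s"
      using card_scc_le scc_decomposition_vertices[OF assms] by simp
    then show "scc_threshold (U i) + ?t i \<le> (9 * ?s + 2) * ?t i"
      by (simp add: scc_threshold_def power2_eq_square algebra_simps)
  qed
  also have "\<dots> = (9 * ?s + 2) * (\<Sum>i\<le>k. ?t i)"
    by (simp add: sum_distrib_left)
  also have "\<dots> \<le> (9 * ?s + 2) * ?s"
    using sum_t by (rule mult_left_mono) simp
  finally have "(\<Sum>i\<le>k. scc_threshold (U i) + ?t i) \<le> (9 * ?s + 2) * ?s" .
  moreover have "k < ?s"
  proof -
    have "(\<Sum>i\<le>k. 1) \<le> (\<Sum>i\<le>k. ?t i)"
      using card_scc_pos by (intro sum_mono) (simp add: Suc_leI)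
    then show ?thesis
      using sum_t by simp
  qed
  ultimately show ?thesis
    by (simp add: power2_eq_square algebra_simps)
qed

definition common_period :: nat where
  "common_period = Lcm (period ` {u \<in> V. cyclic u})"

lemma common_period_pos: "0 < common_period"
proof -
  have "0 \<notin> period ` {u \<in> V. cyclic u}"
    using period_pos_le(1) by (metis (mono_tags, lifting) imageE less_irrefl mem_Collect_eq)
  moreover have "finite (period ` {u \<in> V. cyclic u})"
    using finite_vertices by simp
  ultimately show ?thesis
    unfolding common_period_def using Lcm_0_iff_nat by (metis gr0I)
qed

lemma period_dvd_common_period: "u \<in> V \<Longrightarrow> cyclic u \<Longrightarrow> period u dvd common_period"
  by (simp add: common_period_def dvd_Lcm)

definition reduced_length :: "'v \<Rightarrow> nat \<Rightarrow> nat" where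
  "reduced_length u l = scc_threshold u + (l - scc_threshold u) mod period u"

lemma long_walk_reduced_length:
  assumes "cyclic u" "w \<in> scc u" "(u, w) \<in> R ^^ l" "scc_threshold u \<le> l"
  shows "(u, w) \<in> R ^^ (reduced_length u l + c * period u)"
proof -
  have "(reduced_length u l + c * period u) mod period u
      = (scc_threshold u + (l - scc_threshold u) mod period u) mod period u"
    unfolding reduced_length_def by (rule mod_mult_self1)
  also have "\<dots> = l mod period u"
    unfolding mod_add_right_eq using assms(4) by simp
  finally show ?thesis
    using long_walk_within_scc[OF assms(1-3)] by (simp add: reduced_length_def)
qed

lemma reduced_length_le:
  assumes "cyclic u"
  shows "reduced_length u l \<le> scc_threshold u + card (scc u)"
proof -
  have "(l - scc_threshold u) mod period u \<le> card (scc u)"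
    using period_pos_le[OF assms] by (meson less_imp_le_nat mod_less_divisor order_trans)
  then show ?thesis
    by (simp add: reduced_length_def)
qed

lemma reduced_length_add:
  assumes "scc_threshold u \<le> l"
  shows "l = reduced_length u l + (l - scc_threshold u) div period u * period u"
proof -
  have "reduced_length u l + (l - scc_threshold u) div period u * period u
      = scc_threshold u + ((l - scc_threshold u) mod period u + (l - scc_threshold u) div period u * period u)"
    unfolding reduced_length_def by (rule add.assoc)
  also have "\<dots> = l"
    unfolding mod_div_mult_eq using assms by (rule le_add_diff_inverse)
  finally show ?thesis ..
qed

lemma short_walk_le_threshold:
  assumes "(u, w) \<in> R ^^ l" "w \<in> scc u" "\<not> (cyclic u \<and> scc_threshold u \<le> l)"
  shows "l \<le> scc_threshold u"
  using walk_in_acyclic_scc[OF _ assms(1,2)] assms(3) by fastforce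

text \<open>Normal form of the lengths of the walks with a given decomposition: every long piece in a
  cyclic component may be shortened to its reduced length and then lengthened by any multiple of
  the period of its component.\<close>

lemma scc_decomposition_lengths:
  assumes "x \<in> V" "scc_decomposition x z k U W L"
  obtains I :: "nat set" and d :: "nat \<Rightarrow> nat" and b :: nat and q :: "nat \<Rightarrow> nat"
  where "finite I" "\<forall>i\<in>I. 0 < d i \<and> d i \<le> card V \<and> d i dvd common_period"
    and "(\<Sum>i\<le>k. L i) + k = b + (\<Sum>i\<in>I. q i * d i)"
    and "b + (card V)\<^sup>2 \<le> 10 * (card V)\<^sup>2 + 3 * card V"
    and "\<forall>c. (x, z) \<in> R ^^ (b + (\<Sum>i\<in>I. c i * d i))"
proof -
  have piece: "(U i, W i) \<in> R ^^ L i" "W i \<in> scc (U i)" "U i \<in> V" if "i \<le> k" for i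
    using assms(2) that scc_decomposition_vertices[OF assms] by (auto simp: scc_decomposition_def)
  define I where "I = {i. i \<le> k \<and> cyclic (U i) \<and> scc_threshold (U i) \<le> L i}"
  define d where "d i = period (U i)" for i
  define L0 where "L0 i = (if i \<in> I then reduced_length (U i) (L i) else L i)" for i
  define Lc where "Lc c i = L0 i + (if i \<in> I then c i * d i else 0)" for c i
  define b where "b = (\<Sum>i\<le>k. L0 i) + k"
  have I: "finite I" "I \<subseteq> {..k}"
    by (auto simp: I_def)
  have d: "\<forall>i\<in>I. 0 < d i \<and> d i \<le> card V \<and> d i dvd common_period"
  proof
    fix i
    assume "i \<in> I"
    then have "i \<le> k" "cyclic (U i)"
      by (simp_all add: I_def)
    then show "0 < d i \<and> d i \<le> card V \<and> d i dvd common_period"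
      using period_pos_le card_scc_le period_dvd_common_period piece(3) unfolding d_def
      by (meson order_trans)
  qed
  have Lc_sum: "(\<Sum>i\<le>k. Lc c i) + k = b + (\<Sum>i\<in>I. c i * d i)" for c
    using I sum.inter_restrict[of "{..k}" "\<lambda>i. c i * d i" I]
    by (simp add: Lc_def b_def sum.distrib Int_absorb1)
  define q where "q i = (L i - scc_threshold (U i)) div d i" for i
  have "L i = Lc q i" for i
    using reduced_length_add by (auto simp: Lc_def L0_def I_def d_def q_def)
  then have L_sum: "(\<Sum>i\<le>k. L i) + k = b + (\<Sum>i\<in>I. q i * d i)"
    using Lc_sum[of q] by simp
  have "L0 i \<le> scc_threshold (U i) + card (scc (U i))" if "i \<le> k" for i
    using reduced_length_le short_walk_le_threshold[OF piece(1,2)[OF that]] that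
    by (force simp: L0_def I_def)
  then have "(\<Sum>i\<le>k. L0 i) \<le> (\<Sum>i\<le>k. scc_threshold (U i) + card (scc (U i)))"
    by (intro sum_mono) simp
  then have b_bound: "b + (card V)\<^sup>2 \<le> 10 * (card V)\<^sup>2 + 3 * card V"
    using scc_decomposition_threshold_sum[OF assms] unfolding b_def by linarith
  have "(U i, W i) \<in> R ^^ Lc c i" if "i \<le> k" for i c
  proof (cases "i \<in> I")
    case True
    then have "cyclic (U i)" "scc_threshold (U i) \<le> L i"
      by (simp_all add: I_def)
    then show ?thesis
      using long_walk_reduced_length[OF _ piece(2,1)[OF that], of "c i"] True
      by (simp add: Lc_def L0_def d_def)
  qed (use piece(1)[OF that] in \<open>simp add: Lc_def L0_def\<close>)
  then have walks: "\<forall>c. (x, z) \<in> R ^^ (b + (\<Sum>i\<in>I. c i * d i))"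
    using relpow_concat[of k U W "Lc c" R for c] assms(2) Lc_sum
    by (simp add: scc_decomposition_def)
  show ?thesis
    by (rule that[OF I(1) d L_sum b_bound walks])
qed

lemma relpow_mod_common_period:
  assumes "x \<in> V" "(x, z) \<in> R ^^ J"
    and "10 * (card V)\<^sup>2 + 3 * card V \<le> J" "10 * (card V)\<^sup>2 + 3 * card V \<le> J'"
    and "J mod common_period = J' mod common_period"
  shows "(x, z) \<in> R ^^ J'"
proof -
  obtain k U W L where D: "scc_decomposition x z k U W L" and J: "J = (\<Sum>i\<le>k. L i) + k"
    using scc_decomposition_exists[OF assms(2)] by blast
  obtain I :: "nat set" and d b q where I: "finite I" and d: "\<forall>i\<in>I. 0 < d i \<and> d i \<le> card V \<and> d i dvd common_period"
    and "(\<Sum>i\<le>k. L i) + k = b + (\<Sum>i\<in>I. q i * d i)"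
    and b: "b + (card V)\<^sup>2 \<le> 10 * (card V)\<^sup>2 + 3 * card V"
    and walks: "\<forall>c. (x, z) \<in> R ^^ (b + (\<Sum>i\<in>I. c i * d i))"
    by (rule scc_decomposition_lengths[OF assms(1) D])
  with J have J_eq: "J = b + (\<Sum>i\<in>I. q i * d i)"
    by simp
  have "0 < (card V)\<^sup>2"
    using assms(1) finite_vertices card_gt_0_iff by fastforce
  have "I \<noteq> {}"
  proof
    assume "I = {}"
    then have "J = b"
      using J_eq by simp
    with b assms(3) \<open>0 < (card V)\<^sup>2\<close> show False
      by linarith
  qed
  then obtain i0 where "i0 \<in> I"
    by blast
  then obtain c where "J' = b + (\<Sum>i\<in>I. c i * d i)"
    using exists_combination_if_mod_eq[OF I _ _ J_eq assms(5), of i0 "card V"] d b assms(4)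
    by (auto simp: power2_eq_square)
  then show ?thesis
    using walks by simp
qed

lemma relpow_Image_subset: "Y \<subseteq> V \<Longrightarrow> (R ^^ k) `` Y \<subseteq> V"
proof (induction k)
  case (Suc k)
  then show ?case
    using edges_subset by (auto simp: relcomp_Image)
qed simp

lemma Image_relpow_periodic:
  assumes "Y \<subseteq> V" "10 * (card V)\<^sup>2 + 3 * card V \<le> j"
  shows "(R ^^ (j + common_period)) `` Y = (R ^^ j) `` Y"
proof -
  have "(j + common_period) mod common_period = j mod common_period"
    by simp
  then have "(y, z) \<in> R ^^ (j + common_period) \<longleftrightarrow> (y, z) \<in> R ^^ j" if "y \<in> Y" for y z
    using relpow_mod_common_period[of y z "j + common_period" j]
      relpow_mod_common_period[of y z j "j + common_period"] assms that
    by auto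
  then show ?thesis
    by blast
qed

lemma card_orbit_le:
  assumes "Y \<subseteq> V"
  shows "card (range (\<lambda>k. (R ^^ k) `` Y)) \<le> 10 * (card V)\<^sup>2 + 3 * card V + common_period"
proof -
  let ?N = "10 * (card V)\<^sup>2 + 3 * card V + common_period"
  let ?f = "\<lambda>k. (R ^^ k) `` Y"
  have "\<exists>k' < ?N. ?f k = ?f k'" for k
  proof (induction k rule: less_induct)
    case (less k)
    show ?case
    proof (cases "k < ?N")
      case False
      then have "?f k = ?f (k - common_period)"
        using Image_relpow_periodic[OF assms, of "k - common_period"] by simp
      moreover have "k - common_period < k"
        using False common_period_pos by simp
      ultimately show ?thesis
        using less.IH by metis
    qed blast
  qed
  then have "range ?f \<subseteq> ?f ` {..<?N}"
    by blast
  then have "card (range ?f) \<le> card (?f ` {..<?N})"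
    by (intro card_mono) simp_all
  also have "\<dots> \<le> ?N"
    using card_image_le[of "{..<?N}" ?f] by simp
  finally show ?thesis .
qed

lemma common_period_le_landau: "common_period \<le> landau (card V)"
proof -
  let ?C = "{u \<in> V. cyclic u}"
  let ?P = "period ` ?C"
  \<comment> \<open>one vertex of each period; their components are pairwise disjoint\<close>
  define rep where "rep = inv_into ?C period"
  have rep: "rep v \<in> ?C" "period (rep v) = v" if "v \<in> ?P" for v
    unfolding rep_def by (rule inv_into_into[OF that], rule f_inv_into_f[OF that])
  have inj: "inj_on rep ?P"
    using rep(2) by (rule inj_on_inverseI)
  have "(\<Sum>v\<in>?P. v) \<le> (\<Sum>v\<in>?P. card (scc (rep v)))"
  proof (rule sum_mono)
    fix v
    assume v: "v \<in> ?P"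
    then have "period (rep v) \<le> card (scc (rep v))"
      using rep(1) period_pos_le(2) by blast
    then show "v \<le> card (scc (rep v))"
      using rep(2)[OF v] by simp
  qed
  also have "\<dots> = (\<Sum>u\<in>rep ` ?P. card (scc u))"
    using sum.reindex[OF inj, of "\<lambda>u. card (scc u)"] by (simp add: comp_def)
  also have "\<dots> \<le> card V"
  proof (rule sum_card_scc_le)
    show "rep ` ?P \<subseteq> V"
      using rep(1) by blast
    fix u v
    assume "u \<in> rep ` ?P" "v \<in> rep ` ?P" "v \<in> scc u"
    then obtain a b where ab: "a \<in> ?P" "u = rep a" "b \<in> ?P" "v = rep b"
      by blast
    then have "a = period u" "b = period v"
      using rep(2) by simp_all
    then show "u = v"
      using ab period_scc[OF \<open>v \<in> scc u\<close>] by simp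
  qed
  finally have "\<Sum>?P \<le> card V"
    by simp
  moreover have "0 \<notin> ?P"
    using period_pos_le(1) by (metis (no_types, lifting) imageE less_irrefl mem_Collect_eq)
  ultimately show ?thesis
    unfolding common_period_def using finite_vertices by (intro Lcm_le_landau) simp_all
qed

lemma card_orbit_le_landau:
  assumes "Y \<subseteq> V"
  shows "card (range (\<lambda>k. (R ^^ k) `` Y)) \<le> landau (card V) + 13 * (card V)\<^sup>2"
proof -
  have "3 * card V \<le> 3 * (card V)\<^sup>2"
    by (simp add: power2_eq_square)
  then show ?thesis
    using card_orbit_le[OF assms] common_period_le_landau by linarith
qed

end

section \<open>Subset construction\<close>

lemma delta_word_snoc: "delta_word \<delta> S (w @ [a]) = reach_by (delta_word \<delta> S w) \<delta> a"
  by (simp add: delta_word_def reach_by_def)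

lemma delta_word_subset:
  assumes "is_nfa \<Sigma> Q Q0 \<delta> F" "S \<subseteq> Q" "set w \<subseteq> \<Sigma>"
  shows "delta_word \<delta> S w \<subseteq> Q"
  using assms(3)
proof (induction w rule: rev_induct)
  case Nil
  then show ?case
    using assms(2) by (simp add: delta_word_def)
next
  case (snoc a w)
  then have "delta_word \<delta> S w \<subseteq> Q" "a \<in> \<Sigma>"
    by simp_all
  then show ?case
    using assms(1) unfolding delta_word_snoc reach_by_def is_nfa_def by blast
qed

definition reachable_subsets :: "'a set \<Rightarrow> ('q \<Rightarrow> 'a \<Rightarrow> 'q set) \<Rightarrow> 'q set \<Rightarrow> 'q set set" where
  "reachable_subsets \<Sigma> \<delta> Q0 = {delta_word \<delta> Q0 w | w. set w \<subseteq> \<Sigma>}"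

lemma reachable_subsets_subset:
  assumes "Q0 \<in> S" "\<And>X b. X \<in> S \<Longrightarrow> b \<in> \<Sigma> \<Longrightarrow> reach_by X \<delta> b \<in> S"
  shows "reachable_subsets \<Sigma> \<delta> Q0 \<subseteq> S"
proof -
  have "set w \<subseteq> \<Sigma> \<Longrightarrow> delta_word \<delta> Q0 w \<in> S" for w
  proof (induction w rule: rev_induct)
    case Nil
    then show ?case
      using assms(1) by (simp add: delta_word_def)
  next
    case (snoc b w)
    then show ?case
      using assms(2) by (simp add: delta_word_snoc)
  qed
  then show ?thesis
    unfolding reachable_subsets_def by blast
qed

lemma reachable_subsets_Pow:
  assumes "is_nfa \<Sigma> Q Q0 \<delta> F"
  shows "reachable_subsets \<Sigma> \<delta> Q0 \<subseteq> Pow Q"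
  using assms delta_word_subset[OF assms] by (auto simp: reachable_subsets_def is_nfa_def)

lemma delta_word_powerset:
  "delta_word (\<lambda>X a. {reach_by X \<delta> a}) {S} w = {delta_word \<delta> S w}"
proof (induction w rule: rev_induct)
  case Nil
  then show ?case
    by (simp add: delta_word_def)
next
  case (snoc a w)
  then show ?case
    by (simp add: delta_word_snoc reach_by_def)
qed

lemma Q0_in_reachable_subsets: "Q0 \<in> reachable_subsets \<Sigma> \<delta> Q0"
  unfolding reachable_subsets_def by (rule CollectI, rule exI[of _ "[]"]) (simp add: delta_word_def)

lemma reach_by_in_reachable_subsets:
  assumes "X \<in> reachable_subsets \<Sigma> \<delta> Q0" "b \<in> \<Sigma>"
  shows "reach_by X \<delta> b \<in> reachable_subsets \<Sigma> \<delta> Q0"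
proof -
  obtain w where "X = delta_word \<delta> Q0 w" "set w \<subseteq> \<Sigma>"
    using assms(1) by (auto simp: reachable_subsets_def)
  then have "reach_by X \<delta> b = delta_word \<delta> Q0 (w @ [b])" "set (w @ [b]) \<subseteq> \<Sigma>"
    using assms(2) by (simp_all add: delta_word_snoc)
  then show ?thesis
    unfolding reachable_subsets_def by blast
qed

lemma subset_construction:
  assumes "is_nfa \<Sigma> Q Q0 \<delta> F"
  defines "R \<equiv> reachable_subsets \<Sigma> \<delta> Q0"
  shows "is_dfa \<Sigma> R {Q0} (\<lambda>X a. {reach_by X \<delta> a}) {X \<in> R. X \<inter> F \<noteq> {}}"
    and "nfa_lang \<Sigma> {Q0} (\<lambda>X a. {reach_by X \<delta> a}) {X \<in> R. X \<inter> F \<noteq> {}} = nfa_lang \<Sigma> Q0 \<delta> F"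
proof -
  have "finite R"
    using reachable_subsets_Pow[OF assms(1)] assms(1) finite_subset
    by (fastforce simp: R_def is_nfa_def)
  then show "is_dfa \<Sigma> R {Q0} (\<lambda>X a. {reach_by X \<delta> a}) {X \<in> R. X \<inter> F \<noteq> {}}"
    using assms(1) Q0_in_reachable_subsets reach_by_in_reachable_subsets
    by (auto simp: is_dfa_def is_nfa_def R_def)
  show "nfa_lang \<Sigma> {Q0} (\<lambda>X a. {reach_by X \<delta> a}) {X \<in> R. X \<inter> F \<noteq> {}} = nfa_lang \<Sigma> Q0 \<delta> F"
    by (auto simp: nfa_lang_def delta_word_powerset R_def reachable_subsets_def)
qed

lemma dfa_rename:
  assumes "is_dfa \<Sigma> Q Q0 \<delta> F" "inj_on h Q"
  defines "\<delta>' \<equiv> \<lambda>i a. h ` \<delta> (inv_into Q h i) a"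
  shows "is_dfa \<Sigma> (h ` Q) (h ` Q0) \<delta>' (h ` F)"
    and "nfa_lang \<Sigma> (h ` Q0) \<delta>' (h ` F) = nfa_lang \<Sigma> Q0 \<delta> F"
proof -
  have nfa: "is_nfa \<Sigma> Q Q0 \<delta> F"
    using assms(1) by (simp add: is_dfa_def)
  have \<delta>': "\<delta>' (h q) a = h ` \<delta> q a" if "q \<in> Q" for q a
    using assms(2) that by (simp add: \<delta>'_def)
  have card_h: "card (h ` X) = card X" if "X \<subseteq> Q" for X
    using assms(2) that by (meson card_image inj_on_subset)
  show "is_dfa \<Sigma> (h ` Q) (h ` Q0) \<delta>' (h ` F)"
    using assms(1) \<delta>' card_h by (auto simp: is_dfa_def is_nfa_def image_mono)
  have step: "reach_by (h ` X) \<delta>' a = h ` reach_by X \<delta> a" if "X \<subseteq> Q" for X a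
  proof -
    have "reach_by (h ` X) \<delta>' a = (\<Union>q\<in>X. \<delta>' (h q) a)"
      by (simp add: reach_by_def)
    also have "\<dots> = (\<Union>q\<in>X. h ` \<delta> q a)"
      using \<delta>' that by (intro SUP_cong) auto
    finally show ?thesis
      by (simp add: reach_by_def image_UN)
  qed
  have dw: "delta_word \<delta>' (h ` Q0) w = h ` delta_word \<delta> Q0 w" if "set w \<subseteq> \<Sigma>" for w
    using that
  proof (induction w rule: rev_induct)
    case Nil
    then show ?case
      by (simp add: delta_word_def)
  next
    case (snoc a w)
    then have "delta_word \<delta> Q0 w \<subseteq> Q"
      using delta_word_subset[OF nfa] nfa by (simp add: is_nfa_def)
    with snoc show ?case
      by (simp add: delta_word_snoc step)
  qed
  have "delta_word \<delta>' (h ` Q0) w \<inter> h ` F \<noteq> {} \<longleftrightarrow> delta_word \<delta> Q0 w \<inter> F \<noteq> {}"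
    if "set w \<subseteq> \<Sigma>" for w
  proof -
    have "delta_word \<delta> Q0 w \<subseteq> Q" "F \<subseteq> Q"
      using delta_word_subset[OF nfa _ that] nfa by (auto simp: is_nfa_def)
    then show ?thesis
      unfolding dw[OF that] using assms(2) by (simp add: inj_on_image_Int[symmetric])
  qed
  then show "nfa_lang \<Sigma> (h ` Q0) \<delta>' (h ` F) = nfa_lang \<Sigma> Q0 \<delta> F"
    by (auto simp: nfa_lang_def)
qed

lemma dfa_of_reachable_subsets:
  assumes "is_nfa \<Sigma> Q Q0 \<delta> F"
  shows "\<exists>(Q' :: nat set) Q0' \<delta>' F'. is_dfa \<Sigma> Q' Q0' \<delta>' F' \<and>
    nfa_lang \<Sigma> Q0' \<delta>' F' = nfa_lang \<Sigma> Q0 \<delta> F \<and> card Q' = card (reachable_subsets \<Sigma> \<delta> Q0)"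
proof -
  let ?R = "reachable_subsets \<Sigma> \<delta> Q0"
  have "finite ?R"
    using reachable_subsets_Pow[OF assms] assms finite_subset by (fastforce simp: is_nfa_def)
  then obtain h :: "_ \<Rightarrow> nat" where h: "inj_on h ?R"
    using finite_imp_inj_to_nat_seg by blast
  show ?thesis
    using dfa_rename[OF subset_construction(1)[OF assms] h] subset_construction(2)[OF assms]
      card_image[OF h] by blast
qed

section \<open>Automata remembering the last symbol\<close>

lemma remembers_last_reach_by_disjoint:
  assumes "remembers_last \<Sigma> Q \<delta>" "a \<in> \<Sigma>" "b \<in> \<Sigma>" "a \<noteq> b"
  shows "reach_by Q \<delta> a \<inter> reach_by Q \<delta> b = {}"
  using assms unfolding remembers_last_def reach_by_def by blast

lemma reach_by_mono: "X \<subseteq> Y \<Longrightarrow> reach_by X \<delta> a \<subseteq> reach_by Y \<delta> a"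
  unfolding reach_by_def by blast

lemma finite_digraph_letter:
  assumes "is_nfa \<Sigma> Q Q0 \<delta> F" "a \<in> \<Sigma>"
  shows "finite_digraph (reach_by Q \<delta> a) (SIGMA q:reach_by Q \<delta> a. \<delta> q a)"
proof
  have "reach_by Q \<delta> a \<subseteq> Q"
    using assms unfolding is_nfa_def reach_by_def by blast
  then show "finite (reach_by Q \<delta> a)"
    using assms(1) finite_subset by (auto simp: is_nfa_def)
  show "(SIGMA q:reach_by Q \<delta> a. \<delta> q a) \<subseteq> reach_by Q \<delta> a \<times> reach_by Q \<delta> a"
    using \<open>reach_by Q \<delta> a \<subseteq> Q\<close> unfolding reach_by_def by blast
qed

lemma reach_by_other_letter:
  assumes "is_nfa \<Sigma> Q Q0 \<delta> F" "remembers_last \<Sigma> Q \<delta>" "a \<in> \<Sigma>" "b \<in> \<Sigma>" "b \<noteq> a" "X \<subseteq> Q"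
  shows "reach_by X \<delta> b \<subseteq> Q - reach_by Q \<delta> a"
proof -
  have "reach_by X \<delta> b \<subseteq> reach_by Q \<delta> b"
    using assms(6) by (rule reach_by_mono)
  moreover have "reach_by Q \<delta> b \<subseteq> Q"
    using assms(1,4) unfolding is_nfa_def reach_by_def by blast
  ultimately show ?thesis
    using remembers_last_reach_by_disjoint[OF assms(2,3,4)] assms(5) by blast
qed

lemma Sigma_Image_reach_by: "Z \<subseteq> A \<Longrightarrow> (SIGMA q:A. \<delta> q a) `` Z = reach_by Z \<delta> a"
  by (auto simp: Sigma_Image reach_by_def)

lemma reachable_subsets_cover:
  assumes nfa: "is_nfa \<Sigma> Q Q0 \<delta> F" and "remembers_last \<Sigma> Q \<delta>" "a \<in> \<Sigma>"
  defines "U \<equiv> Q - reach_by Q \<delta> a" and "E \<equiv> SIGMA q:reach_by Q \<delta> a. \<delta> q a"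
  shows "reachable_subsets \<Sigma> \<delta> Q0 \<subseteq> insert Q0 (Pow U \<union>
    (\<Union>X\<in>insert Q0 (Pow U - {{}}). range (\<lambda>k. (E ^^ k) `` reach_by X \<delta> a)))"
    (is "_ \<subseteq> ?S")
proof -
  let ?Qa = "reach_by Q \<delta> a" and ?A = "insert Q0 (Pow U - {{}})"
  interpret finite_digraph ?Qa E
    unfolding E_def using nfa assms(3) by (rule finite_digraph_letter)
  have A_sub: "reach_by X0 \<delta> a \<subseteq> ?Qa" if "X0 \<in> ?A" for X0
    using that nfa by (intro reach_by_mono) (auto simp: is_nfa_def U_def)
  have start: "reach_by X0 \<delta> a \<in> ?S" if "X0 \<in> ?A" for X0
    using that rangeI[of "\<lambda>k. (E ^^ k) `` reach_by X0 \<delta> a" 0] by auto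
  have "reachable_subsets \<Sigma> \<delta> Q0 \<subseteq> ?S \<inter> Pow Q"
  proof (rule reachable_subsets_subset)
    show "Q0 \<in> ?S \<inter> Pow Q"
      using nfa by (simp add: is_nfa_def)
    fix X b
    assume X: "X \<in> ?S \<inter> Pow Q" and "b \<in> \<Sigma>"
    have "reach_by X \<delta> b \<subseteq> Q"
      using X \<open>b \<in> \<Sigma>\<close> nfa unfolding is_nfa_def reach_by_def by blast
    moreover have "reach_by X \<delta> b \<in> ?S"
    proof (cases "b = a")
      case False
      then show ?thesis
        using reach_by_other_letter[OF nfa assms(2,3) \<open>b \<in> \<Sigma>\<close>] X by (auto simp: U_def)
    next
      case True
      from X consider "X \<in> ?A" | "X = {}"
        | X0 k where "X0 \<in> ?A" "X = (E ^^ k) `` reach_by X0 \<delta> a"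
        by blast
      then show ?thesis
      proof cases
        case 3
        then have "X \<subseteq> ?Qa"
          using relpow_Image_subset[OF A_sub[OF 3(1)]] by simp
        then have "reach_by X \<delta> b = E `` X"
          unfolding E_def True by (rule Sigma_Image_reach_by[symmetric])
        also have "\<dots> = (E ^^ Suc k) `` reach_by X0 \<delta> a"
          using 3(2) by (simp add: relcomp_Image)
        finally show ?thesis
          using 3(1) by blast
      qed (use start True in \<open>simp_all add: reach_by_def\<close>)
    qed
    ultimately show "reach_by X \<delta> b \<in> ?S \<inter> Pow Q"
      by blast
  qed
  then show ?thesis
    by (rule subset_trans[OF _ Int_lower1])
qed

lemma card_insert_Pow_Un_le:
  assumes "finite U" "finite (\<Union>X\<in>insert Q0 (Pow U - {{}}). Orb X)"
    and "\<And>X. X \<in> insert Q0 (Pow U - {{}}) \<Longrightarrow> card (Orb X) \<le> H"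
  shows "card (insert Q0 (Pow U \<union> (\<Union>X\<in>insert Q0 (Pow U - {{}}). Orb X))) \<le> 1 + 2 ^ card U * (H + 1)"
proof -
  let ?A = "insert Q0 (Pow U - {{}})"
  have "card ?A \<le> Suc (card (Pow U - {{}}))"
    using card_Un_le[of "{Q0}" "Pow U - {{}}"] by simp
  also have "\<dots> = 2 ^ card U"
    using assms(1) by (simp add: card_Pow card_Diff_singleton)
  finally have card_A: "card ?A \<le> 2 ^ card U" .
  have "card (\<Union>X\<in>?A. Orb X) \<le> (\<Sum>X\<in>?A. card (Orb X))"
    using assms(1) by (intro card_UN_le) simp
  also have "\<dots> \<le> card ?A * H"
    using sum_bounded_above[of ?A "\<lambda>X. card (Orb X)" H] assms(3) by simp
  also have "\<dots> \<le> 2 ^ card U * H"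
    using card_A by (rule mult_right_mono) simp
  finally have "card (\<Union>X\<in>?A. Orb X) \<le> 2 ^ card U * H" .
  then show ?thesis
    using card_Un_le[of "{Q0}" "Pow U \<union> (\<Union>X\<in>?A. Orb X)"] card_Un_le[of "Pow U" "\<Union>X\<in>?A. Orb X"]
      assms(1) by (simp add: card_Pow)
qed

lemma card_reachable_subsets_le:
  assumes nfa: "is_nfa \<Sigma> Q Q0 \<delta> F" and "\<Sigma> \<noteq> {}" and "remembers_last \<Sigma> Q \<delta>"
  defines "n1 \<equiv> Max ((\<lambda>a. card (reach_by Q \<delta> a)) ` \<Sigma>)"
  shows "card (reachable_subsets \<Sigma> \<delta> Q0) \<le> 2 ^ (card Q - n1) * (landau n1 + 15 * n1\<^sup>2)"
proof -
  let ?R = "reachable_subsets \<Sigma> \<delta> Q0"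
  have fin: "finite \<Sigma>" "finite Q"
    using nfa by (simp_all add: is_nfa_def)
  have "n1 \<in> (\<lambda>a. card (reach_by Q \<delta> a)) ` \<Sigma>"
    unfolding n1_def using fin(1) assms(2) by (intro Max_in) simp_all
  then obtain a where a: "a \<in> \<Sigma>" "card (reach_by Q \<delta> a) = n1"
    by (auto simp del: reach_by_def)
  show ?thesis
  proof (cases "n1 = 0")
    case True
    have "card ?R \<le> card (Pow Q)"
      using reachable_subsets_Pow[OF nfa] fin(2) by (intro card_mono) simp_all
    also have "\<dots> = 2 ^ (card Q - n1) * 1"
      using True fin(2) by (simp add: card_Pow)
    also have "\<dots> \<le> 2 ^ (card Q - n1) * (landau n1 + 15 * n1\<^sup>2)"
      using one_le_landau[of n1] by (intro mult_left_mono) simp_all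
    finally show ?thesis .
  next
    case False
    let ?Qa = "reach_by Q \<delta> a" and ?H = "landau n1 + 13 * n1\<^sup>2"
    define U where "U = Q - ?Qa"
    define E where "E = (SIGMA q:?Qa. \<delta> q a)"
    let ?A = "insert Q0 (Pow U - {{}})" and ?orbit = "\<lambda>X. range (\<lambda>k. (E ^^ k) `` reach_by X \<delta> a)"
    interpret finite_digraph ?Qa E
      unfolding E_def using nfa a(1) by (rule finite_digraph_letter)
    have Qa: "?Qa \<subseteq> Q"
      using nfa a(1) unfolding is_nfa_def reach_by_def by blast
    have U: "finite U" "card U = card Q - n1"
      using fin(2) Qa a(2) by (simp_all add: U_def card_Diff_subset finite_subset)
    have orbit_Qa: "reach_by X \<delta> a \<subseteq> ?Qa" if "X \<in> ?A" for X
      using that nfa by (intro reach_by_mono) (auto simp: U_def is_nfa_def)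
    have "(\<Union>X\<in>?A. ?orbit X) \<subseteq> Pow ?Qa"
      using relpow_Image_subset[OF orbit_Qa] by blast
    then have fin_orbits: "finite (\<Union>X\<in>?A. ?orbit X)"
      by (rule finite_subset) (simp add: finite_vertices)
    have card_orbit: "card (?orbit X) \<le> ?H" if "X \<in> ?A" for X
      using card_orbit_le_landau[OF orbit_Qa[OF that]] a(2) by simp
    have "card ?R \<le> card (insert Q0 (Pow U \<union> (\<Union>X\<in>?A. ?orbit X)))"
      using reachable_subsets_cover[OF nfa assms(3) a(1)] U(1) fin_orbits
      unfolding U_def E_def by (intro card_mono) simp_all
    also have "\<dots> \<le> 1 + 2 ^ card U * (?H + 1)"
      by (rule card_insert_Pow_Un_le[OF U(1) fin_orbits card_orbit])
    also have "\<dots> \<le> 2 ^ card U * ?H + 2 ^ card U * 2"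
      using one_le_power[of 2 "card U"] by (simp add: algebra_simps)
    also have "\<dots> \<le> 2 ^ card U * ?H + 2 ^ card U * (2 * n1\<^sup>2)"
      using False by simp
    also have "\<dots> = 2 ^ card U * (landau n1 + 15 * n1\<^sup>2)"
      by (simp add: algebra_simps)
    finally show ?thesis
      using U(2) by simp
  qed
qed

theorem lemma4:
  shows "\<exists>C::real. \<forall>(\<Sigma>::nat set) (Q::nat set) Q0 \<delta> F.
    is_nfa \<Sigma> Q Q0 \<delta> F \<longrightarrow> \<Sigma> \<noteq> {} \<longrightarrow> remembers_last \<Sigma> Q \<delta> \<longrightarrow>
    (let n = card Q; n1 = Max ((\<lambda>a. card (reach_by Q \<delta> a)) ` \<Sigma>) in
      \<exists>(Q'::nat set) Q0' \<delta>' F'. is_dfa \<Sigma> Q' Q0' \<delta>' F' \<and>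
        nfa_lang \<Sigma> Q0' \<delta>' F' = nfa_lang \<Sigma> Q0 \<delta> F \<and>
        real (card Q') \<le> 2 ^ (n - n1) * (real (landau n1) + C * real n1 ^ 2))"
proof (intro exI[of _ "15 :: real"] allI impI)
  fix \<Sigma> Q Q0 :: "nat set" and \<delta> :: "nat \<Rightarrow> nat \<Rightarrow> nat set" and F :: "nat set"
  assume nfa: "is_nfa \<Sigma> Q Q0 \<delta> F" and "\<Sigma> \<noteq> {}" and "remembers_last \<Sigma> Q \<delta>"
  define n1 where "n1 = Max ((\<lambda>a. card (reach_by Q \<delta> a)) ` \<Sigma>)"
  obtain Q' :: "nat set" and Q0' \<delta>' F' where dfa: "is_dfa \<Sigma> Q' Q0' \<delta>' F'"
    and lang: "nfa_lang \<Sigma> Q0' \<delta>' F' = nfa_lang \<Sigma> Q0 \<delta> F"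
    and card: "card Q' = card (reachable_subsets \<Sigma> \<delta> Q0)"
    using dfa_of_reachable_subsets[OF nfa] by blast
  have "card Q' \<le> 2 ^ (card Q - n1) * (landau n1 + 15 * n1\<^sup>2)"
    using card_reachable_subsets_le[OF nfa \<open>\<Sigma> \<noteq> {}\<close> \<open>remembers_last \<Sigma> Q \<delta>\<close>] card
    by (simp add: n1_def)
  then have "real (card Q') \<le> 2 ^ (card Q - n1) * (real (landau n1) + 15 * real n1 ^ 2)"
    by (metis (mono_tags, lifting) of_nat_le_iff of_nat_add of_nat_mult of_nat_numeral of_nat_power)
  with dfa lang show "let n = card Q; n1 = Max ((\<lambda>a. card (reach_by Q \<delta> a)) ` \<Sigma>) in
      \<exists>(Q'::nat set) Q0' \<delta>' F'. is_dfa \<Sigma> Q' Q0' \<delta>' F' \<and>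
        nfa_lang \<Sigma> Q0' \<delta>' F' = nfa_lang \<Sigma> Q0 \<delta> F \<and>
        real (card Q') \<le> 2 ^ (n - n1) * (real (landau n1) + 15 * real n1 ^ 2)"
    unfolding Let_def n1_def by blast
qed

end
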